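(* Consider two user types $k\in\{1,2\}$ (write $-k$ for the other type), with $N_k$ users of type $k$, individual arrival rate $\lambda_k$, departure rate $\mu_k$, and instantaneous utility of use $u_k(\tau)=\alpha_k-\beta_k/\tau$ ($\alpha_k,\beta_k>0$). Suppose the service provider uses CSMA with transmission probability $p\in(0,1)$, has no admission control (every arriving user is admitted), and offers the pricing policy $\mathbf P=(\phi,(p_s,0))$. Let $a_j=\lambda_j/(\lambda_j+\mu_j)$ and $x_j(\pi_{j,1})=\pi_{j,1}\,a_j\,\frac{p}{1-p}+1$ for $j=1,2$. When the other users play according to the profile $\pi=(\pi_1,\pi_2)$, $\pi_j=[\pi_{j,0},\pi_{j,1}]$, the expected utility of use and expected cost of a particular type-$k$ user playing $\pi_k'=[\pi_{k,0}',\pi_{k,1}']$ are $$U_k(\theta,\alpha,(\pi;\pi_k'))=\pi_{k,1}'\,\Delta T\,a_k\Big[\alpha_k-\frac{\beta_k}{p}\big(x_k(\pi_{k,1})\big)^{N_k-1}\big(x_{-k}(\pi_{-k,1})\big)^{N_{-k}}\Big]$$ and $C_k(\theta,\alpha,\mathbf P,(\pi;\pi_k'))=\pi_{k,1}'\,p_s$.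
   Context: Plan $0$ is the dummy plan $\phi$ (no subscription); plan $1$ charges subscription fee $p_s\ge0$ per billing period of length $\Delta T$ and zero per-unit charge. Each type-$k$ user independently chooses plan $1$ with probability $\pi_{k,1}$ (the particular user with probability $\pi_{k,1}'$), fixed thereafter; the realization gives $n_{k,1}$ type-$k$ users on plan $1$. Each plan-1 user alternates: while offline it arrives at the network after an exponential time of rate $\lambda_k$, and while online it departs after an exponential time of rate $\mu_k$, independently; $\mathbf X(\infty)$ denotes the steady-state system state, $x_{k,1}$ the number of online type-$k$ plan-1 users. Under the CSMA protocol (equivalent to slotted ALOHA with transmission probability $p$, normalized bandwidth $1$) an online user's throughput when $X=x_{1,1}+x_{2,1}$ users are online is $\tau(\mathbf x)=p(1-p)^{X-1}$. Definitions: $V_k^1(\mathbf n)=\Delta T\sum_{\mathbf x}\Pr(\mathbf X(\infty)=\mathbf x)\frac{x_{k,1}}{n_{k,1}}u_k(\tau(\mathbf x))$; $U_k(\theta,\alpha,(\pi;\pi_k'))=\pi_{k,1}'\sum_{\mathbf n:n_{k,1}\ge1}\Pr(\mathbf n\mid k,1)V_k^1(\mathbf n)$, where $\Pr(\mathbf n\mid k,1)$ is the probability of the realization $\mathbf n$ given that the particular user chose plan $1$ (other users choosing independently according to $\pi$); $C_k(\theta,\alpha,\mathbf P,(\pi;\pi_k'))=\pi_{k,1}'\big(p_s+\sum_{\mathbf n}\Pr(\mathbf n\mid k,1)\cdot 0\cdot B_k^1(\mathbf n)\big)$. *)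

theory Defs
  imports Complex_Main
begin

text \<open>User types are indexed by 1 and 2; the other type of k is 3 - k.
  Per-type parameters are functions nat => _ evaluated at 1 and 2.\<close>

definition other :: "nat \<Rightarrow> nat" where
  "other k = 3 - k"

definition binom_pmf :: "nat \<Rightarrow> real \<Rightarrow> nat \<Rightarrow> real" where
  "binom_pmf n q m = real (n choose m) * q ^ m * (1 - q) ^ (n - m)"

text \<open>Steady-state probability that a single plan-1 user of type j is online
  (stationary law of the two-state on/off chain with rates lambda_j, mu_j).\<close>
definition online_prob :: "(nat \<Rightarrow> real) \<Rightarrow> (nat \<Rightarrow> real) \<Rightarrow> nat \<Rightarrow> real" where
  "online_prob lam mu j = lam j / (lam j + mu j)"

text \<open>Steady-state distribution Pr(X(oo) = x) for the system state x = (x_{k,1}, x_{-k,1}),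
  given n_{k,1} = nk and n_{-k,1} = no plan-1 users, without admission control:
  every plan-1 user is independently online with probability online_prob.\<close>
definition steady_state ::
  "(nat \<Rightarrow> real) \<Rightarrow> (nat \<Rightarrow> real) \<Rightarrow> nat \<Rightarrow> nat \<Rightarrow> nat \<Rightarrow> nat \<Rightarrow> nat \<Rightarrow> real" where
  "steady_state lam mu k nk no xk xo =
     binom_pmf nk (online_prob lam mu k) xk * binom_pmf no (online_prob lam mu (other k)) xo"

text \<open>CSMA (slotted ALOHA) per-user throughput when X users are online.\<close>
definition tau :: "real \<Rightarrow> nat \<Rightarrow> real" where
  "tau p X = p * (1 - p) ^ (X - 1)"

definition util :: "(nat \<Rightarrow> real) \<Rightarrow> (nat \<Rightarrow> real) \<Rightarrow> nat \<Rightarrow> real \<Rightarrow> real" where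
  "util alpha beta k t = alpha k - beta k / t"

definition V1 ::
  "real \<Rightarrow> real \<Rightarrow> (nat \<Rightarrow> real) \<Rightarrow> (nat \<Rightarrow> real) \<Rightarrow> (nat \<Rightarrow> real) \<Rightarrow> (nat \<Rightarrow> real)
    \<Rightarrow> nat \<Rightarrow> nat \<Rightarrow> nat \<Rightarrow> real" where
  "V1 dT p lam mu alpha beta k nk no =
     dT * (\<Sum>xk\<in>{0..nk}. \<Sum>xo\<in>{0..no}.
             steady_state lam mu k nk no xk xo * (real xk / real nk)
             * util alpha beta k (tau p (xk + xo)))"

text \<open>Pr(n | k,1): the particular type-k user is on plan 1, the other N_k - 1 type-k users
  and the N_{-k} type-(-k) users choose plan 1 independently with prob. pi1 j.\<close>
definition cond_prob ::
  "(nat \<Rightarrow> nat) \<Rightarrow> (nat \<Rightarrow> real) \<Rightarrow> nat \<Rightarrow> nat \<Rightarrow> nat \<Rightarrow> real" where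
  "cond_prob N pi1 k nk no =
     (if 1 \<le> nk then binom_pmf (N k - 1) (pi1 k) (nk - 1) else 0)
     * binom_pmf (N (other k)) (pi1 (other k)) no"

definition U ::
  "(nat \<Rightarrow> nat) \<Rightarrow> real \<Rightarrow> real \<Rightarrow> (nat \<Rightarrow> real) \<Rightarrow> (nat \<Rightarrow> real) \<Rightarrow> (nat \<Rightarrow> real)
    \<Rightarrow> (nat \<Rightarrow> real) \<Rightarrow> (nat \<Rightarrow> real) \<Rightarrow> nat \<Rightarrow> real \<Rightarrow> real" where
  "U N dT p lam mu alpha beta pi1 k pi1' =
     pi1' * (\<Sum>nk\<in>{1..N k}. \<Sum>no\<in>{0..N (other k)}.
               cond_prob N pi1 k nk no * V1 dT p lam mu alpha beta k nk no)"

text \<open>Expected cost; B is the (arbitrary) usage-based bill B_k^1(n), charged at per-unit price 0.\<close>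
definition C ::
  "(nat \<Rightarrow> nat) \<Rightarrow> real \<Rightarrow> (nat \<Rightarrow> nat \<Rightarrow> real) \<Rightarrow> (nat \<Rightarrow> real) \<Rightarrow> nat \<Rightarrow> real \<Rightarrow> real" where
  "C N ps B pi1 k pi1' =
     pi1' * (ps + (\<Sum>nk\<in>{0..N k}. \<Sum>no\<in>{0..N (other k)}.
                     cond_prob N pi1 k nk no * 0 * B nk no))"

definition xfun :: "real \<Rightarrow> (nat \<Rightarrow> real) \<Rightarrow> (nat \<Rightarrow> real) \<Rightarrow> nat \<Rightarrow> real \<Rightarrow> real" where
  "xfun p lam mu j q = q * online_prob lam mu j * (p / (1 - p)) + 1"

end

theory Submission
  imports Defs
begin

text \<open>Both expectations reduce to the binomial generating function
  \<open>\<Sum>m. binom_pmf n q m * y ^ m = (q * y + (1 - q)) ^ n\<close>.  Without admission control the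
  online counts are binomial; size-biasing by \<open>x\<^sub>k / n\<^sub>k\<close> removes the tagged user, and
  \<open>1 / \<tau>\<close> is a product of powers of \<open>1 / (1 - p)\<close>, so \<open>V\<^sub>k\<^sup>1\<close> is a generating function
  evaluated at \<open>1 / (1 - p)\<close>.  Averaging over the binomial plan choices is again a generating
  function, and an affine combination of the values \<open>xfun \<dots> 1\<close> gives \<open>xfun \<dots> \<pi>\<close>.\<close>

lemma sum_binom_pmf_mult_power:
  "(\<Sum>m\<in>{0..n}. binom_pmf n q m * y ^ m) = (q * y + (1 - q)) ^ n"
  unfolding binom_pmf_def atLeast0AtMost binomial_ring
  by (rule sum.cong) (auto simp: power_mult_distrib mult_ac)

lemma sum_binom_pmf_pair_affine:
  "(\<Sum>i\<in>{0..m}. \<Sum>j\<in>{0..n}. binom_pmf m q i * binom_pmf n q' j * (c - d * y ^ i * z ^ j))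
     = c - d * (q * y + (1 - q)) ^ m * (q' * z + (1 - q')) ^ n"
proof -
  let ?b = "binom_pmf m q" and ?b' = "binom_pmf n q'"
  have "(\<Sum>i\<in>{0..m}. \<Sum>j\<in>{0..n}. ?b i * ?b' j * (c - d * y ^ i * z ^ j))
      = (\<Sum>i\<in>{0..m}. \<Sum>j\<in>{0..n}. c * (?b i * 1 ^ i * (?b' j * 1 ^ j))
                                     - d * (?b i * y ^ i * (?b' j * z ^ j)))"
    by (simp add: algebra_simps)
  also have "\<dots> = c * ((\<Sum>i\<in>{0..m}. ?b i * 1 ^ i) * (\<Sum>j\<in>{0..n}. ?b' j * 1 ^ j))
                 - d * ((\<Sum>i\<in>{0..m}. ?b i * y ^ i) * (\<Sum>j\<in>{0..n}. ?b' j * z ^ j))"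
    unfolding sum_product by (simp only: sum_subtractf sum_distrib_left)
  finally show ?thesis
    by (simp only: sum_binom_pmf_mult_power) simp
qed

lemma sum_binom_pmf_size_biased:
  "(\<Sum>m\<in>{0..Suc n}. binom_pmf (Suc n) q m * (real m / real (Suc n)) * f m)
     = q * (\<Sum>i\<in>{0..n}. binom_pmf n q i * f (Suc i))"
proof -
  have shift: "binom_pmf (Suc n) q (Suc i) * (real (Suc i) / real (Suc n)) = q * binom_pmf n q i"
    for i
  proof -
    have "binom_pmf (Suc n) q (Suc i) * (real (Suc i) / real (Suc n))
        = real (Suc i) * real (Suc n choose Suc i) / real (Suc n) * q * (q ^ i * (1 - q) ^ (n - i))"
      unfolding binom_pmf_def by (simp add: mult_ac)
    also have "real (Suc i) * real (Suc n choose Suc i) = real (Suc n) * real (n choose i)"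
      using Suc_times_binomial[of i n] by (metis of_nat_mult)
    finally show ?thesis
      unfolding binom_pmf_def by simp
  qed
  have "(\<Sum>m\<in>{0..Suc n}. binom_pmf (Suc n) q m * (real m / real (Suc n)) * f m)
      = (\<Sum>i\<in>{0..n}. binom_pmf (Suc n) q (Suc i) * (real (Suc i) / real (Suc n)) * f (Suc i))"
    unfolding sum.atLeast0_atMost_Suc_shift by simp
  also have "\<dots> = q * (\<Sum>i\<in>{0..n}. binom_pmf n q i * f (Suc i))"
    unfolding shift sum_distrib_left by (simp only: mult.assoc)
  finally show ?thesis .
qed

lemma util_tau_Suc:
  assumes "0 < p" "p < 1"
  shows "util alpha beta k (tau p (Suc (i + j)))
           = alpha k - beta k / p * (1 / (1 - p)) ^ i * (1 / (1 - p)) ^ j"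
  using assms by (simp add: util_def tau_def power_add power_one_over field_simps)

lemma xfun_one:
  assumes "p < 1"
  shows "online_prob lam mu j * (1 / (1 - p)) + (1 - online_prob lam mu j) = xfun p lam mu j 1"
  using assms by (simp add: xfun_def field_simps)

lemma xfun_affine:
  "q * xfun p lam mu j 1 + (1 - q) = xfun p lam mu j q"
  by (simp add: xfun_def algebra_simps)

lemma V1_Suc:
  assumes "0 < p" "p < 1"
  shows "V1 dT p lam mu alpha beta k (Suc n) no
           = dT * online_prob lam mu k *
             (alpha k - beta k / p * xfun p lam mu k 1 ^ n * xfun p lam mu (other k) 1 ^ no)"
proof -
  define a where "a = online_prob lam mu k"
  define b where "b = online_prob lam mu (other k)"
  define r where "r = 1 / (1 - p)"
  have "V1 dT p lam mu alpha beta k (Suc n) no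
      = dT * (\<Sum>xk\<in>{0..Suc n}. binom_pmf (Suc n) a xk * (real xk / real (Suc n)) *
               (\<Sum>xo\<in>{0..no}. binom_pmf no b xo * util alpha beta k (tau p (xk + xo))))"
    unfolding V1_def steady_state_def a_def b_def sum_distrib_left
    by (intro arg_cong[where f = "(*) dT"] sum.cong refl) (simp add: mult_ac)
  also have "\<dots> = dT * (a * (\<Sum>i\<in>{0..n}. binom_pmf n a i *
               (\<Sum>xo\<in>{0..no}. binom_pmf no b xo * util alpha beta k (tau p (Suc i + xo)))))"
    by (simp only: sum_binom_pmf_size_biased)
  also have "\<dots> = dT * a * (\<Sum>i\<in>{0..n}. \<Sum>xo\<in>{0..no}.
                    binom_pmf n a i * binom_pmf no b xo * (alpha k - beta k / p * r ^ i * r ^ xo))"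
    by (simp add: util_tau_Suc[OF assms, folded r_def] sum_distrib_left mult_ac)
  also have "\<dots> = dT * a * (alpha k - beta k / p * xfun p lam mu k 1 ^ n
                                                 * xfun p lam mu (other k) 1 ^ no)"
    unfolding sum_binom_pmf_pair_affine r_def a_def b_def xfun_one[OF assms(2)] ..
  finally show ?thesis
    unfolding a_def .
qed

lemma C_eq: "C N ps B pi1 k pi1' = pi1' * ps"
  unfolding C_def by simp

theorem lemma1:
  fixes N :: "nat \<Rightarrow> nat"
    and lam mu alpha beta pi1 :: "nat \<Rightarrow> real"
    and dT p ps pi1' :: real
    and B :: "nat \<Rightarrow> nat \<Rightarrow> real"
    and k :: nat
  assumes k: "k \<in> {1, 2}"
    and N: "\<forall>j\<in>{1, 2}. N j \<ge> 1"
    and lam: "\<forall>j\<in>{1, 2}. lam j > 0"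
    and mu: "\<forall>j\<in>{1, 2}. mu j > 0"
    and alpha: "\<forall>j\<in>{1, 2}. alpha j > 0"
    and beta: "\<forall>j\<in>{1, 2}. beta j > 0"
    and pi1: "\<forall>j\<in>{1, 2}. 0 \<le> pi1 j \<and> pi1 j \<le> 1"
    and pi1': "0 \<le> pi1' \<and> pi1' \<le> 1"
    and p: "0 < p \<and> p < 1"
    and ps: "ps \<ge> 0"
    and dT: "dT > 0"
  shows "(U N dT p lam mu alpha beta pi1 k pi1' =
           pi1' * dT * online_prob lam mu k *
           (alpha k - beta k / p * (xfun p lam mu k (pi1 k)) ^ (N k - 1)
                                  * (xfun p lam mu (other k) (pi1 (other k))) ^ N (other k)))
         \<and> C N ps B pi1 k pi1' = pi1' * ps"
proof
  have "N k \<ge> 1"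
    using N k by blast
  then obtain M where M: "N k = Suc M"
    using Suc_le_D by auto
  have summand: "cond_prob N pi1 k (Suc j) no * V1 dT p lam mu alpha beta k (Suc j) no
      = dT * online_prob lam mu k *
        (binom_pmf M (pi1 k) j * binom_pmf (N (other k)) (pi1 (other k)) no *
         (alpha k - beta k / p * xfun p lam mu k 1 ^ j * xfun p lam mu (other k) 1 ^ no))" for j no
    using p by (simp add: cond_prob_def V1_Suc M)
  have "U N dT p lam mu alpha beta pi1 k pi1'
      = pi1' * (dT * online_prob lam mu k) *
        (\<Sum>j\<in>{0..M}. \<Sum>no\<in>{0..N (other k)}.
           binom_pmf M (pi1 k) j * binom_pmf (N (other k)) (pi1 (other k)) no *
           (alpha k - beta k / p * xfun p lam mu k 1 ^ j * xfun p lam mu (other k) 1 ^ no))"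
    unfolding U_def M One_nat_def sum.atLeast_Suc_atMost_Suc_shift comp_def summand
    by (simp only: sum_distrib_left mult.assoc)
  then show "U N dT p lam mu alpha beta pi1 k pi1' =
           pi1' * dT * online_prob lam mu k *
           (alpha k - beta k / p * (xfun p lam mu k (pi1 k)) ^ (N k - 1)
                                  * (xfun p lam mu (other k) (pi1 (other k))) ^ N (other k))"
    unfolding sum_binom_pmf_pair_affine xfun_affine M by simp
qed (rule C_eq)

end
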